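(* Let $(E,\mu)$ and $(F,\nu)$ be fuzzy Riesz spaces and let $T:E\rightarrow F$ be a fuzzy Riesz homomorphism, with kernel $\mathrm{Ker}(T)=\{x\in E: Tx=0\}$. Then: (1) For $x\in E$: $\nu(0,Tx)>\frac12$ if and only if there exists $z\in \mathrm{Ker}(T)$ with $\mu(0,z)>\frac12$ and $\mu(0,x+z)>\frac12$. Consequently, for $x,y\in E$: $\nu(Ty,Tx)>\frac12$ if and only if there exists $w\in E$ with $\mu(x,w)>\frac12$, $\mu(y,w)>\frac12$ and $Tw=Tx$. (2) For $x,y\in E$: $\nu(|Tx|,|Ty|)>\frac12$ if and only if there exists $w\in \mathrm{Ker}(T)$ with $\mu(|w|,|x|)>\frac12$ and $\mu(|x-w|,|y|)>\frac12$.
   Context: A fuzzy order on a real vector space $E$ is a map $\mu:E\times E\to[0,1]$ with $\mu(x,x)=1$ for all $x$; $\mu(x,y)+\mu(y,x)>1$ implies $x=y$; and $\mu(x,z)\ge\sup_{y\in E}\min(\mu(x,y),\mu(y,z))$. Write $x\le y$ for $\mu(x,y)>\frac12$. For $A\subseteq E$, $y$ is an upper bound of $A$ if $x\le y$ for all $x\in A$; $z=\sup A$ if $z$ is an upper bound of $A$ and $z\le y$ for every upper bound $y$ of $A$; lower bounds and $\inf$ are defined dually. $(E,\mu)$ is a fuzzy ordered linear space if $\mu(x_1,x_2)>\frac12$ implies $\mu(x_1,x_2)\le\mu(x_1+x,x_2+x)$ for all $x\in E$ and $\mu(x_1,x_2)\le\mu(\alpha x_1,\alpha x_2)$ for all real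 $\alpha>0$. It is a fuzzy Riesz space if in addition $x\vee y=\sup\{x,y\}$ and $x\wedge y=\inf\{x,y\}$ exist for all $x,y$. Put $x^+=x\vee 0$, $x^-=(-x)\vee0$, $|x|=x\vee(-x)$. A fuzzy Riesz homomorphism between fuzzy Riesz spaces is a linear map $T$ with $T(x\vee y)=Tx\vee Ty$ for all $x,y$. *)

theory Defs
  imports Complex_Main
begin

definition fuzzy_order :: "('a \<Rightarrow> 'a \<Rightarrow> real) \<Rightarrow> bool" where
  "fuzzy_order \<mu> \<longleftrightarrow>
     (\<forall>x y. 0 \<le> \<mu> x y \<and> \<mu> x y \<le> 1) \<and>
     (\<forall>x. \<mu> x x = 1) \<and>
     (\<forall>x y. \<mu> x y + \<mu> y x > 1 \<longrightarrow> x = y) \<and>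
     (\<forall>x z. \<mu> x z \<ge> Sup {min (\<mu> x y) (\<mu> y z) | y. True})"

definition fle :: "('a \<Rightarrow> 'a \<Rightarrow> real) \<Rightarrow> 'a \<Rightarrow> 'a \<Rightarrow> bool" where
  "fle \<mu> x y \<longleftrightarrow> \<mu> x y > 1/2"

definition is_fupper :: "('a \<Rightarrow> 'a \<Rightarrow> real) \<Rightarrow> 'a set \<Rightarrow> 'a \<Rightarrow> bool" where
  "is_fupper \<mu> A y \<longleftrightarrow> (\<forall>x\<in>A. fle \<mu> x y)"

definition is_flower :: "('a \<Rightarrow> 'a \<Rightarrow> real) \<Rightarrow> 'a set \<Rightarrow> 'a \<Rightarrow> bool" where
  "is_flower \<mu> A y \<longleftrightarrow> (\<forall>x\<in>A. fle \<mu> y x)"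

definition is_fsup :: "('a \<Rightarrow> 'a \<Rightarrow> real) \<Rightarrow> 'a set \<Rightarrow> 'a \<Rightarrow> bool" where
  "is_fsup \<mu> A z \<longleftrightarrow> is_fupper \<mu> A z \<and> (\<forall>y. is_fupper \<mu> A y \<longrightarrow> fle \<mu> z y)"

definition is_finf :: "('a \<Rightarrow> 'a \<Rightarrow> real) \<Rightarrow> 'a set \<Rightarrow> 'a \<Rightarrow> bool" where
  "is_finf \<mu> A z \<longleftrightarrow> is_flower \<mu> A z \<and> (\<forall>y. is_flower \<mu> A y \<longrightarrow> fle \<mu> y z)"

definition fuzzy_ordered_linear_space :: "('a::real_vector \<Rightarrow> 'a \<Rightarrow> real) \<Rightarrow> bool" where
  "fuzzy_ordered_linear_space \<mu> \<longleftrightarrow> fuzzy_order \<mu> \<and>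
     (\<forall>x1 x2 x. \<mu> x1 x2 > 1/2 \<longrightarrow> \<mu> x1 x2 \<le> \<mu> (x1 + x) (x2 + x)) \<and>
     (\<forall>x1 x2 (\<alpha>::real). \<mu> x1 x2 > 1/2 \<and> \<alpha> > 0 \<longrightarrow> \<mu> x1 x2 \<le> \<mu> (\<alpha> *\<^sub>R x1) (\<alpha> *\<^sub>R x2))"

definition fuzzy_riesz_space :: "('a::real_vector \<Rightarrow> 'a \<Rightarrow> real) \<Rightarrow> bool" where
  "fuzzy_riesz_space \<mu> \<longleftrightarrow> fuzzy_ordered_linear_space \<mu> \<and>
     (\<forall>x y. (\<exists>z. is_fsup \<mu> {x, y} z) \<and> (\<exists>z. is_finf \<mu> {x, y} z))"

text \<open>x \<or> y and x \<and> y (unique by antisymmetry of the fuzzy order).\<close>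
definition fsup :: "('a \<Rightarrow> 'a \<Rightarrow> real) \<Rightarrow> 'a \<Rightarrow> 'a \<Rightarrow> 'a" where
  "fsup \<mu> x y = (THE z. is_fsup \<mu> {x, y} z)"

definition finf :: "('a \<Rightarrow> 'a \<Rightarrow> real) \<Rightarrow> 'a \<Rightarrow> 'a \<Rightarrow> 'a" where
  "finf \<mu> x y = (THE z. is_finf \<mu> {x, y} z)"

definition fabs :: "('a::real_vector \<Rightarrow> 'a \<Rightarrow> real) \<Rightarrow> 'a \<Rightarrow> 'a" where
  "fabs \<mu> x = fsup \<mu> x (- x)"

definition fuzzy_riesz_hom ::
  "('a::real_vector \<Rightarrow> 'a \<Rightarrow> real) \<Rightarrow> ('b::real_vector \<Rightarrow> 'b \<Rightarrow> real) \<Rightarrow> ('a \<Rightarrow> 'b) \<Rightarrow> bool" where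
  "fuzzy_riesz_hom \<mu> \<nu> T \<longleftrightarrow> linear T \<and> (\<forall>x y. T (fsup \<mu> x y) = fsup \<nu> (T x) (T y))"

end

theory Submission
  imports Defs
begin

text \<open>A fuzzy Riesz homomorphism preserves suprema, hence positive parts, absolute values and
  order. For (1) the kernel witness is \<open>z = (-x)\<^sup>+\<close>, since \<open>x + (-x)\<^sup>+ = x\<^sup>+\<close>, and in its
  consequence \<open>w = x \<or> y\<close>. For (2) the witness is \<open>w = (x\<^sup>+ - |y|)\<^sup>+ - (x\<^sup>- - |y|)\<^sup>+\<close>:
  cutting \<open>x\<^sup>+\<close> and \<open>x\<^sup>-\<close> off at level \<open>|y|\<close> leaves \<open>|x - w| \<le> |y|\<close> and \<open>|w| \<le> |x|\<close>,
  and \<open>T w = 0\<close> because \<open>T(x\<^sup>\<plusminus>) \<le> |Tx| \<le> |Ty| = T|y|\<close>.\<close>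

locale fuzzy_riesz =
  fixes \<mu> :: "'a::real_vector \<Rightarrow> 'a \<Rightarrow> real"
  assumes fuzzy_riesz_space: "fuzzy_riesz_space \<mu>"
begin

lemma fuzzy_order: "fuzzy_order \<mu>"
  using fuzzy_riesz_space unfolding fuzzy_riesz_space_def fuzzy_ordered_linear_space_def by blast

lemma fle_refl: "fle \<mu> x x"
  using fuzzy_order unfolding fuzzy_order_def fle_def by simp

lemma fle_antisym: "fle \<mu> x y \<Longrightarrow> fle \<mu> y x \<Longrightarrow> x = y"
  using fuzzy_order unfolding fuzzy_order_def fle_def by fastforce

lemma fle_trans:
  assumes "fle \<mu> x y" "fle \<mu> y z"
  shows "fle \<mu> x z"
proof -
  have bounded: "\<forall>x y. 0 \<le> \<mu> x y \<and> \<mu> x y \<le> 1"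
    and sup_le: "Sup {min (\<mu> x y) (\<mu> y z) | y. True} \<le> \<mu> x z"
    using fuzzy_order unfolding fuzzy_order_def by blast+
  have "bdd_above {min (\<mu> x y) (\<mu> y z) | y. True}"
    using bounded by (intro bdd_aboveI[where M = 1]) (auto simp: min_le_iff_disj)
  then have "min (\<mu> x y) (\<mu> y z) \<le> Sup {min (\<mu> x y) (\<mu> y z) | y. True}"
    by (intro cSup_upper) auto
  with sup_le assms show ?thesis
    unfolding fle_def by linarith
qed

lemma fle_add_right: "fle \<mu> x y \<Longrightarrow> fle \<mu> (x + c) (y + c)"
  using fuzzy_riesz_space unfolding fuzzy_riesz_space_def fuzzy_ordered_linear_space_def fle_def
  by (meson less_le_trans)

lemma fle_add_right_iff: "fle \<mu> (x + c) (y + c) \<longleftrightarrow> fle \<mu> x y"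
  using fle_add_right[of "x + c" "y + c" "- c"] fle_add_right[of x y c] by auto

lemma fle_scaleR: "fle \<mu> x y \<Longrightarrow> 0 < a \<Longrightarrow> fle \<mu> (a *\<^sub>R x) (a *\<^sub>R y)"
  using fuzzy_riesz_space unfolding fuzzy_riesz_space_def fuzzy_ordered_linear_space_def fle_def
  by (meson less_le_trans)

lemma fle_add_mono: "fle \<mu> a b \<Longrightarrow> fle \<mu> c d \<Longrightarrow> fle \<mu> (a + c) (b + d)"
  using fle_add_right[of a b c] fle_add_right[of c d b] fle_trans by (simp add: add.commute)

lemma fle_iff_diff_nonneg: "fle \<mu> x y \<longleftrightarrow> fle \<mu> 0 (y - x)"
  using fle_add_right_iff[of x "- x" y] by simp

lemma fle_iff_diff_nonpos: "fle \<mu> x y \<longleftrightarrow> fle \<mu> (x - y) 0"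
  using fle_add_right_iff[of x "- y" y] by simp

lemma fle_uminus: "fle \<mu> x y \<Longrightarrow> fle \<mu> (- y) (- x)"
  using fle_add_right_iff[of x "- x - y" y] by (simp add: algebra_simps)

lemma fle_diff_nonneg_left: "fle \<mu> 0 b \<Longrightarrow> fle \<mu> a c \<Longrightarrow> fle \<mu> (a - b) c"
  using fle_add_right[of 0 b "a - b"] fle_trans by simp

lemma is_fsup_unique: "is_fsup \<mu> A z \<Longrightarrow> is_fsup \<mu> A z' \<Longrightarrow> z = z'"
  unfolding is_fsup_def using fle_antisym by blast

lemma is_fsup_fsup: "is_fsup \<mu> {x, y} (fsup \<mu> x y)"
proof -
  obtain z where "is_fsup \<mu> {x, y} z"
    using fuzzy_riesz_space unfolding fuzzy_riesz_space_def by blast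
  then show ?thesis
    unfolding fsup_def using is_fsup_unique by (metis theI)
qed

lemma fsup_eqI: "is_fsup \<mu> {x, y} z \<Longrightarrow> fsup \<mu> x y = z"
  using is_fsup_fsup is_fsup_unique by blast

lemma fsup_upper1: "fle \<mu> x (fsup \<mu> x y)"
  and fsup_upper2: "fle \<mu> y (fsup \<mu> x y)"
  using is_fsup_fsup unfolding is_fsup_def is_fupper_def by blast+

lemma fsup_least: "fle \<mu> x u \<Longrightarrow> fle \<mu> y u \<Longrightarrow> fle \<mu> (fsup \<mu> x y) u"
  using is_fsup_fsup unfolding is_fsup_def is_fupper_def by blast

lemma fsup_absorb1: "fle \<mu> y x \<Longrightarrow> fsup \<mu> x y = x"
  by (intro fsup_eqI) (auto simp: is_fsup_def is_fupper_def fle_refl)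

lemma fsup_absorb2: "fle \<mu> x y \<Longrightarrow> fsup \<mu> x y = y"
  by (intro fsup_eqI) (auto simp: is_fsup_def is_fupper_def fle_refl)

lemma fsup_add_right: "fsup \<mu> (a + c) (b + c) = fsup \<mu> a b + c"
proof (intro fsup_eqI)
  have "fle \<mu> (fsup \<mu> a b + c) u"
    if "fle \<mu> (a + c) u" "fle \<mu> (b + c) u" for u
  proof -
    have "fle \<mu> a (u - c)" "fle \<mu> b (u - c)"
      using that fle_add_right_iff[of _ c "u - c"] by simp_all
    then show ?thesis
      using fsup_least fle_add_right[of _ "u - c" c] by fastforce
  qed
  then show "is_fsup \<mu> {a + c, b + c} (fsup \<mu> a b + c)"
    unfolding is_fsup_def is_fupper_def
    using fsup_upper1 fsup_upper2 fle_add_right by auto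
qed

lemma add_fsup_uminus_zero: "x + fsup \<mu> (- x) 0 = fsup \<mu> x 0"
proof -
  have "fsup \<mu> (- x + x) (0 + x) = fsup \<mu> (- x) 0 + x"
    by (rule fsup_add_right)
  then show ?thesis
    unfolding fsup_def by (simp add: insert_commute add.commute)
qed

lemma fabs_ge: "fle \<mu> x (fabs \<mu> x)"
  and fabs_ge_uminus: "fle \<mu> (- x) (fabs \<mu> x)"
  unfolding fabs_def using fsup_upper1 fsup_upper2 by auto

lemma fabs_least: "fle \<mu> x u \<Longrightarrow> fle \<mu> (- x) u \<Longrightarrow> fle \<mu> (fabs \<mu> x) u"
  unfolding fabs_def by (rule fsup_least)

lemma fabs_nonneg: "fle \<mu> 0 (fabs \<mu> x)"
proof -
  have "fle \<mu> (x + - x) (fabs \<mu> x + fabs \<mu> x)"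
    using fle_add_mono fabs_ge fabs_ge_uminus by blast
  then have "fle \<mu> ((1/2::real) *\<^sub>R 0) ((1/2::real) *\<^sub>R (2 *\<^sub>R fabs \<mu> x))"
    by (intro fle_scaleR) (simp_all add: scaleR_2)
  then show ?thesis
    by simp
qed

lemma fsup_zero_le_fabs: "fle \<mu> (fsup \<mu> x 0) (fabs \<mu> x)"
  and fsup_uminus_zero_le_fabs: "fle \<mu> (fsup \<mu> (- x) 0) (fabs \<mu> x)"
  using fsup_least fabs_ge fabs_ge_uminus fabs_nonneg by blast+

lemma fsup_diff_zero_bounds:
  assumes "fle \<mu> 0 a" and "fle \<mu> 0 p"
  defines "t \<equiv> fsup \<mu> (p - a) 0"
  shows "fle \<mu> 0 t" and "fle \<mu> t p" and "fle \<mu> 0 (p - t)" and "fle \<mu> (p - t) a"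
proof -
  show "fle \<mu> 0 t"
    unfolding t_def by (rule fsup_upper2)
  show "fle \<mu> t p"
    unfolding t_def using fsup_least fle_diff_nonneg_left[OF assms(1) fle_refl] assms(2) by blast
  then show "fle \<mu> 0 (p - t)"
    using fle_iff_diff_nonneg by blast
  have "fle \<mu> (p - a) t"
    unfolding t_def by (rule fsup_upper1)
  then show "fle \<mu> (p - t) a"
    using fle_add_right[of "p - a" t "a - t"] by (simp add: algebra_simps)
qed

lemma fabs_truncation_le:
  fixes a x :: 'a
  assumes "fle \<mu> 0 a"
  defines "w \<equiv> fsup \<mu> (fsup \<mu> x 0 - a) 0 - fsup \<mu> (fsup \<mu> (- x) 0 - a) 0"
  shows "fle \<mu> (fabs \<mu> w) (fabs \<mu> x)" and "fle \<mu> (fabs \<mu> (x - w)) a"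
proof -
  define p n where "p = fsup \<mu> x 0" and "n = fsup \<mu> (- x) 0"
  define tp tn where "tp = fsup \<mu> (p - a) 0" and "tn = fsup \<mu> (n - a) 0"
  have "fle \<mu> 0 p" "fle \<mu> 0 n"
    unfolding p_def n_def by (rule fsup_upper2)+
  note bounds_p = fsup_diff_zero_bounds[OF assms(1) this(1), folded tp_def]
    and bounds_n = fsup_diff_zero_bounds[OF assms(1) this(2), folded tn_def]
  have "fle \<mu> p (fabs \<mu> x)" "fle \<mu> n (fabs \<mu> x)"
    unfolding p_def n_def by (rule fsup_zero_le_fabs fsup_uminus_zero_le_fabs)+
  have w: "w = tp - tn"
    unfolding w_def tp_def tn_def p_def n_def ..
  have "fle \<mu> (tp - tn) (fabs \<mu> x)" "fle \<mu> (tn - tp) (fabs \<mu> x)"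
    using fle_diff_nonneg_left fle_trans bounds_p bounds_n
      \<open>fle \<mu> p (fabs \<mu> x)\<close> \<open>fle \<mu> n (fabs \<mu> x)\<close> by blast+
  then show "fle \<mu> (fabs \<mu> w) (fabs \<mu> x)"
    unfolding w by (intro fabs_least) (simp_all add: minus_diff_eq)
  have "x = p - n"
    using add_fsup_uminus_zero[of x] unfolding p_def n_def by (simp add: algebra_simps)
  then have "x - w = (p - tp) - (n - tn)"
    unfolding w by (simp add: algebra_simps)
  moreover have "fle \<mu> ((p - tp) - (n - tn)) a" "fle \<mu> ((n - tn) - (p - tp)) a"
    using fle_diff_nonneg_left bounds_p bounds_n by blast+
  ultimately show "fle \<mu> (fabs \<mu> (x - w)) a"
    by (intro fabs_least) (simp_all add: minus_diff_eq)
qed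

end

locale fuzzy_riesz_morphism = E: fuzzy_riesz \<mu> + F: fuzzy_riesz \<nu>
  for \<mu> :: "'a::real_vector \<Rightarrow> 'a \<Rightarrow> real" and \<nu> :: "'b::real_vector \<Rightarrow> 'b \<Rightarrow> real" +
  fixes T :: "'a \<Rightarrow> 'b"
  assumes riesz_hom: "fuzzy_riesz_hom \<mu> \<nu> T"
begin

sublocale linear T
  using riesz_hom unfolding fuzzy_riesz_hom_def by blast

lemma T_fsup: "T (fsup \<mu> x y) = fsup \<nu> (T x) (T y)"
  using riesz_hom unfolding fuzzy_riesz_hom_def by blast

lemma T_fsup_zero: "T (fsup \<mu> x 0) = fsup \<nu> (T x) 0"
  by (simp add: T_fsup)

lemma T_fabs: "T (fabs \<mu> x) = fabs \<nu> (T x)"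
  unfolding fabs_def by (simp add: T_fsup neg)

lemma T_fsup_zero_eq_0: "fle \<nu> (T x) 0 \<Longrightarrow> T (fsup \<mu> x 0) = 0"
  by (simp add: T_fsup_zero F.fsup_absorb2)

lemma T_nonneg: "fle \<mu> 0 x \<Longrightarrow> fle \<nu> 0 (T x)"
  using T_fsup_zero[of x] F.fsup_upper2 by (metis E.fsup_absorb1)

lemma T_mono: "fle \<mu> x y \<Longrightarrow> fle \<nu> (T x) (T y)"
  using T_nonneg[of "y - x"] E.fle_iff_diff_nonneg F.fle_iff_diff_nonneg by (simp add: diff)

lemma nonneg_image_iff:
  "fle \<nu> 0 (T x) \<longleftrightarrow> (\<exists>z\<in>{z. T z = 0}. fle \<mu> 0 z \<and> fle \<mu> 0 (x + z))"
proof
  assume "fle \<nu> 0 (T x)"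
  then have "T (fsup \<mu> (- x) 0) = 0"
    using F.fle_uminus[of 0 "T x"] by (intro T_fsup_zero_eq_0) (simp add: neg)
  moreover have "fle \<mu> 0 (x + fsup \<mu> (- x) 0)"
    unfolding E.add_fsup_uminus_zero by (rule E.fsup_upper2)
  ultimately show "\<exists>z\<in>{z. T z = 0}. fle \<mu> 0 z \<and> fle \<mu> 0 (x + z)"
    using E.fsup_upper2 by blast
next
  assume "\<exists>z\<in>{z. T z = 0}. fle \<mu> 0 z \<and> fle \<mu> 0 (x + z)"
  then show "fle \<nu> 0 (T x)"
    using T_nonneg by (force simp: add)
qed

lemma image_le_iff: "fle \<nu> (T y) (T x) \<longleftrightarrow> (\<exists>w. fle \<mu> x w \<and> fle \<mu> y w \<and> T w = T x)"
proof
  assume "fle \<nu> (T y) (T x)"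
  then have "T (fsup \<mu> x y) = T x"
    by (simp add: T_fsup F.fsup_absorb1)
  then show "\<exists>w. fle \<mu> x w \<and> fle \<mu> y w \<and> T w = T x"
    using E.fsup_upper1 E.fsup_upper2 by blast
qed (use T_mono in metis)

lemma image_fabs_le_iff:
  "fle \<nu> (fabs \<nu> (T x)) (fabs \<nu> (T y)) \<longleftrightarrow>
     (\<exists>w\<in>{w. T w = 0}. fle \<mu> (fabs \<mu> w) (fabs \<mu> x) \<and> fle \<mu> (fabs \<mu> (x - w)) (fabs \<mu> y))"
proof
  assume le: "fle \<nu> (fabs \<nu> (T x)) (fabs \<nu> (T y))"
  define a where "a = fabs \<mu> y"
  have "fle \<nu> (T (fsup \<mu> x 0)) (T a)" "fle \<nu> (T (fsup \<mu> (- x) 0)) (T a)"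
    unfolding a_def T_fsup_zero T_fabs neg
    using F.fsup_zero_le_fabs F.fsup_uminus_zero_le_fabs le F.fle_trans by blast+
  then have "T (fsup \<mu> (fsup \<mu> x 0 - a) 0) = 0" "T (fsup \<mu> (fsup \<mu> (- x) 0 - a) 0) = 0"
    by (simp_all add: T_fsup_zero_eq_0 diff flip: F.fle_iff_diff_nonpos)
  then show "\<exists>w\<in>{w. T w = 0}. fle \<mu> (fabs \<mu> w) (fabs \<mu> x) \<and> fle \<mu> (fabs \<mu> (x - w)) (fabs \<mu> y)"
    using E.fabs_truncation_le[of a x] E.fabs_nonneg a_def
    by (intro bexI[of _ "fsup \<mu> (fsup \<mu> x 0 - a) 0 - fsup \<mu> (fsup \<mu> (- x) 0 - a) 0"])
      (simp_all add: diff)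
next
  assume "\<exists>w\<in>{w. T w = 0}. fle \<mu> (fabs \<mu> w) (fabs \<mu> x) \<and> fle \<mu> (fabs \<mu> (x - w)) (fabs \<mu> y)"
  then obtain w where "T w = 0" "fle \<mu> (fabs \<mu> (x - w)) (fabs \<mu> y)"
    by blast
  then show "fle \<nu> (fabs \<nu> (T x)) (fabs \<nu> (T y))"
    using T_mono by (force simp: T_fabs diff)
qed

end

theorem theorem2p2:
  fixes \<mu> :: "'a::real_vector \<Rightarrow> 'a \<Rightarrow> real" and \<nu> :: "'b::real_vector \<Rightarrow> 'b \<Rightarrow> real"
    and T :: "'a \<Rightarrow> 'b"
  assumes "fuzzy_riesz_space \<mu>" and "fuzzy_riesz_space \<nu>" and "fuzzy_riesz_hom \<mu> \<nu> T"
  shows "(\<forall>x. \<nu> 0 (T x) > 1/2 \<longleftrightarrow>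
              (\<exists>z\<in>{z. T z = 0}. \<mu> 0 z > 1/2 \<and> \<mu> 0 (x + z) > 1/2))
       \<and> (\<forall>x y. \<nu> (T y) (T x) > 1/2 \<longleftrightarrow>
              (\<exists>w. \<mu> x w > 1/2 \<and> \<mu> y w > 1/2 \<and> T w = T x))
       \<and> (\<forall>x y. \<nu> (fabs \<nu> (T x)) (fabs \<nu> (T y)) > 1/2 \<longleftrightarrow>
              (\<exists>w\<in>{w. T w = 0}. \<mu> (fabs \<mu> w) (fabs \<mu> x) > 1/2 \<and> \<mu> (fabs \<mu> (x - w)) (fabs \<mu> y) > 1/2))"
proof -
  interpret fuzzy_riesz_morphism \<mu> \<nu> T
    using assms by (simp add: fuzzy_riesz_morphism_def fuzzy_riesz_morphism_axioms_def fuzzy_riesz_def)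
  show ?thesis
    using nonneg_image_iff image_le_iff image_fabs_le_iff unfolding fle_def by blast
qed

end
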